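(* Let $n\ge2$ and $\mathbf{F}\in\mathbb{R}^n$ with $F_k>0$ for all $k$ and $F_k\ge F_{k+1}$ for $3\le k\le n-1$. Let $U_i=\frac{i}{3/F_1+\sum_{k=2}^i1/F_k}$ and $V_i=\frac{i-1}{\sum_{k=1}^i1/F_k}$ for $2\le i\le n$; let $u$ be the least index in $\arg\max_{2\le i\le n}U_i$ and $v$ the least index in $\arg\max_{2\le i\le n}V_i$. Assume $V_v>U_u$. Define $\boldsymbol\mu\in\mathbb{R}^n$ by $\mu_2=\frac{V_v}{F_1}-\frac12$, $\mu_k=1-\frac{V_v}{F_k}$ for $3\le k\le v$, and $\mu_k=0$ otherwise. Then: (1) $\mu_k\ge0$ for all $1\le k\le n$; (2) $F_1(\frac12+\mu_2)=F_2\big(\frac12-\mu_2+\sum_{i=3}^v\mu_i\big)=F_k(1-\mu_k)=V_v$ for all $3\le k\le v$; (3) $F_k\le V_v$ for all $v+1\le k\le n$.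
   Context: Note $V_v=\frac{v-1}{\sum_{k=1}^v1/F_k}$. *)

theory Defs
  imports Complex_Main
begin

text \<open>Vectors in R^n are represented as functions nat => real, with entries F 1, ..., F n.\<close>

definition U :: "(nat \<Rightarrow> real) \<Rightarrow> nat \<Rightarrow> real" where
  "U F i = real i / (3 / F 1 + (\<Sum>k=2..i. 1 / F k))"

definition V :: "(nat \<Rightarrow> real) \<Rightarrow> nat \<Rightarrow> real" where
  "V F i = (real i - 1) / (\<Sum>k=1..i. 1 / F k)"

definition least_argmax :: "nat \<Rightarrow> (nat \<Rightarrow> real) \<Rightarrow> nat" where
  "least_argmax n W = (LEAST i. 2 \<le> i \<and> i \<le> n \<and> (\<forall>j. 2 \<le> j \<and> j \<le> n \<longrightarrow> W j \<le> W i))"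

definition mu :: "(nat \<Rightarrow> real) \<Rightarrow> nat \<Rightarrow> nat \<Rightarrow> real" where
  "mu F v k = (if k = 2 then V F v / F 1 - 1/2
               else if 3 \<le> k \<and> k \<le> v then 1 - V F v / F k
               else 0)"

end

theory Submission
  imports Defs
begin

text \<open>
  Write \<open>S\<^sub>i = \<Sum>k=1..i. 1 / F k\<close>, so that \<open>V\<^sub>i = (i - 1) / S\<^sub>i\<close>.
  Then \<open>V\<^sub>i\<^sub>+\<^sub>1 = ((i - 1) + 1) / (S\<^sub>i + 1 / F\<^sub>i\<^sub>+\<^sub>1)\<close> is the mediant of \<open>V\<^sub>i\<close> and
  \<open>F\<^sub>i\<^sub>+\<^sub>1 = 1 / (1 / F\<^sub>i\<^sub>+\<^sub>1)\<close>, and \<open>U\<^sub>i = ((i - 1) + 1) / (S\<^sub>i + 2 / F\<^sub>1)\<close> is the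
  mediant of \<open>V\<^sub>i\<close> and \<open>F\<^sub>1 / 2\<close>. A mediant lies between its two fractions, so
  maximality of \<open>V\<^sub>v\<close> gives \<open>F\<^sub>v\<^sub>+\<^sub>1 \<le> V\<^sub>v\<close>, minimality of \<open>v\<close> gives
  \<open>V\<^sub>v < F\<^sub>v\<close>, and \<open>U\<^sub>v \<le> U\<^sub>u < V\<^sub>v\<close> gives \<open>F\<^sub>1 / 2 < V\<^sub>v\<close>. Monotonicity of \<open>F\<close>
  on \<open>[3, n]\<close> spreads the first two bounds to all relevant \<open>k\<close>, which yields the
  sign of \<open>\<mu>\<close> and part (3); the identities of part (2) reduce to \<open>V\<^sub>v S\<^sub>v = v - 1\<close>.
\<close>

lemma mediant_less_iff:
  fixes a b c d :: real
  assumes "0 < b" "0 < d"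
  shows "(a + c) / (b + d) < a / b \<longleftrightarrow> c / d < a / b"
    and "a / b < (a + c) / (b + d) \<longleftrightarrow> a / b < c / d"
    and "(a + c) / (b + d) < c / d \<longleftrightarrow> a / b < c / d"
  using assms by (simp_all add: field_simps)

lemma least_argmax_is_arg_max:
  assumes "2 \<le> n"
  shows "2 \<le> least_argmax n W \<and> least_argmax n W \<le> n
    \<and> (\<forall>j. 2 \<le> j \<and> j \<le> n \<longrightarrow> W j \<le> W (least_argmax n W))"
proof -
  have fin: "finite (W ` {2..n})" and ne: "W ` {2..n} \<noteq> {}"
    using assms by auto
  obtain m where m: "m \<in> {2..n}" "W m = Max (W ` {2..n})"
    using Max_in[OF fin ne] by auto
  then have "2 \<le> m \<and> m \<le> n \<and> (\<forall>j. 2 \<le> j \<and> j \<le> n \<longrightarrow> W j \<le> W m)"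
    using Max_ge[OF fin] by auto
  then show ?thesis
    unfolding least_argmax_def by (rule LeastI)
qed

lemma less_least_argmax:
  assumes "2 \<le> n" "2 \<le> i" "i < least_argmax n W"
  shows "W i < W (least_argmax n W)"
proof -
  have "\<not> (2 \<le> i \<and> i \<le> n \<and> (\<forall>j. 2 \<le> j \<and> j \<le> n \<longrightarrow> W j \<le> W i))"
    using assms(3) unfolding least_argmax_def by (rule not_less_Least)
  then show ?thesis
    using assms least_argmax_is_arg_max[OF assms(1), of W] by force
qed

lemma recip_sum_pos:
  fixes F :: "nat \<Rightarrow> real"
  assumes "1 \<le> i" "\<And>k. 1 \<le> k \<Longrightarrow> k \<le> i \<Longrightarrow> 0 < F k"
  shows "0 < (\<Sum>k=1..i. 1 / F k)"
  using assms by (intro sum_pos) auto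

lemma V_Suc_eq_mediant:
  "1 \<le> i \<Longrightarrow>
    V F (Suc i) = ((real i - 1) + 1) / ((\<Sum>k=1..i. 1 / F k) + 1 / F (Suc i))"
  by (simp add: V_def)

lemma U_eq_mediant:
  "1 \<le> i \<Longrightarrow> U F i = ((real i - 1) + 1) / ((\<Sum>k=1..i. 1 / F k) + 2 / F 1)"
  unfolding U_def by (simp add: sum.atLeast_Suc_atMost numeral_2_eq_2)

lemma V_Suc_less_F_Suc:
  assumes "1 \<le> i" "\<And>k. 1 \<le> k \<Longrightarrow> k \<le> Suc i \<Longrightarrow> 0 < F k"
    and "V F i < V F (Suc i)"
  shows "V F (Suc i) < F (Suc i)"
proof -
  have S: "0 < (\<Sum>k=1..i. 1 / F k)"
    using assms(1,2) by (intro recip_sum_pos) auto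
  have d: "0 < 1 / F (Suc i)"
    using assms(1,2) by simp
  have "V F i < 1 / (1 / F (Suc i))"
    using assms(3) mediant_less_iff(2)[OF S d, of "real i - 1" 1] V_Suc_eq_mediant[OF assms(1)]
    by (simp add: V_def)
  then show ?thesis
    using mediant_less_iff(3)[OF S d, of "real i - 1" 1] V_Suc_eq_mediant[OF assms(1)]
    by (simp add: V_def)
qed

lemma F_Suc_le_V:
  assumes "1 \<le> i" "\<And>k. 1 \<le> k \<Longrightarrow> k \<le> Suc i \<Longrightarrow> 0 < F k"
    and "V F (Suc i) \<le> V F i"
  shows "F (Suc i) \<le> V F i"
proof -
  have S: "0 < (\<Sum>k=1..i. 1 / F k)"
    using assms(1,2) by (intro recip_sum_pos) auto
  have d: "0 < 1 / F (Suc i)"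
    using assms(1,2) by simp
  show ?thesis
    using assms(3) mediant_less_iff(2)[OF S d, of "real i - 1" 1] V_Suc_eq_mediant[OF assms(1)]
    by (simp add: V_def not_less[symmetric])
qed

lemma half_F1_less_V:
  assumes "1 \<le> i" "\<And>k. 1 \<le> k \<Longrightarrow> k \<le> i \<Longrightarrow> 0 < F k"
    and "U F i < V F i"
  shows "F 1 / 2 < V F i"
proof -
  have S: "0 < (\<Sum>k=1..i. 1 / F k)"
    using assms(1,2) by (intro recip_sum_pos) auto
  have d: "0 < 2 / F 1"
    using assms(1,2) by simp
  show ?thesis
    using assms(3) mediant_less_iff(1)[OF S d, of "real i - 1" 1] U_eq_mediant[OF assms(1)]
    by (simp add: V_def)
qed

lemma mu_nonneg:
  assumes "0 < F 1" "F 1 / 2 \<le> V F v" "\<And>k. 3 \<le> k \<Longrightarrow> k \<le> v \<Longrightarrow> V F v \<le> F k"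
  shows "0 \<le> mu F v k"
proof (cases "3 \<le> k \<and> k \<le> v")
  case True
  have "V F v \<le> F k"
    using assms(3) True by blast
  moreover have "0 < F k"
    using assms(1,2) calculation by linarith
  ultimately have "V F v / F k \<le> 1"
    by simp
  then show ?thesis
    using True by (simp add: mu_def)
next
  case False
  then show ?thesis
    using assms(1,2) by (auto simp: mu_def field_simps)
qed

lemma F2_mu_eq_V:
  assumes "2 \<le> v" "\<And>k. 1 \<le> k \<Longrightarrow> k \<le> v \<Longrightarrow> 0 < F k"
  shows "F 2 * (1/2 - mu F v 2 + (\<Sum>i=3..v. mu F v i)) = V F v"
proof -
  define S where "S = (\<Sum>k=1..v. 1 / F k)"
  have "0 < S"
    unfolding S_def using assms by (intro recip_sum_pos) auto
  then have VS: "V F v * S = real v - 1"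
    unfolding V_def S_def[symmetric] by simp
  have split: "S = 1 / F 1 + 1 / F 2 + (\<Sum>k=3..v. 1 / F k)"
  proof -
    have "{1..v} = insert 1 (insert 2 {3..v})"
      using assms(1) by auto
    then show ?thesis
      unfolding S_def by simp
  qed
  have "(\<Sum>i=3..v. mu F v i) = (\<Sum>i=3..v. 1 - V F v / F i)"
    by (rule sum.cong) (auto simp: mu_def)
  also have "\<dots> = real v - 2 - V F v * (\<Sum>k=3..v. 1 / F k)"
    using assms(1) by (simp add: sum_subtractf sum_distrib_left of_nat_diff)
  finally have "1/2 - mu F v 2 + (\<Sum>i=3..v. mu F v i) = V F v / F 2"
    using VS split by (simp add: mu_def algebra_simps)
  moreover have "0 < F 2"
    using assms by simp
  ultimately show ?thesis
    by simp
qed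

theorem lemma7:
  fixes n :: nat and F :: "nat \<Rightarrow> real"
  assumes "n \<ge> 2"
    and "\<And>k. 1 \<le> k \<Longrightarrow> k \<le> n \<Longrightarrow> F k > 0"
    and "\<And>k. 3 \<le> k \<Longrightarrow> k \<le> n - 1 \<Longrightarrow> F k \<ge> F (k + 1)"
    and "V F (least_argmax n (V F)) > U F (least_argmax n (U F))"
  shows "(\<forall>k. 1 \<le> k \<and> k \<le> n \<longrightarrow> mu F (least_argmax n (V F)) k \<ge> 0)
    \<and> F 1 * (1/2 + mu F (least_argmax n (V F)) 2) = V F (least_argmax n (V F))
    \<and> F 2 * (1/2 - mu F (least_argmax n (V F)) 2
              + (\<Sum>i=3..least_argmax n (V F). mu F (least_argmax n (V F)) i))
        = V F (least_argmax n (V F))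
    \<and> (\<forall>k. 3 \<le> k \<and> k \<le> least_argmax n (V F) \<longrightarrow>
          F k * (1 - mu F (least_argmax n (V F)) k) = V F (least_argmax n (V F)))
    \<and> (\<forall>k. least_argmax n (V F) + 1 \<le> k \<and> k \<le> n \<longrightarrow> F k \<le> V F (least_argmax n (V F)))"
proof -
  define v where "v = least_argmax n (V F)"
  have v_arg_max: "2 \<le> v" "v \<le> n" "\<And>j. 2 \<le> j \<Longrightarrow> j \<le> n \<Longrightarrow> V F j \<le> V F v"
    using least_argmax_is_arg_max[OF assms(1), of "V F"] unfolding v_def by auto
  have pos: "\<And>k. 1 \<le> k \<Longrightarrow> k \<le> v \<Longrightarrow> 0 < F k"
    using assms(2) v_arg_max(2) by auto
  have antimono: "F b \<le> F a" if "3 \<le> a" "a \<le> b" "b \<le> n" for a b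
    using lift_Suc_antimono_le_ivl[of "{3..<n}" F a b] assms(3) that by force
  have "U F v < V F v"
    using least_argmax_is_arg_max[OF assms(1), of "U F"] v_arg_max(1,2) assms(4)
    unfolding v_def by force
  then have half_F1: "F 1 / 2 < V F v"
    using v_arg_max(1) pos by (intro half_F1_less_V) auto
  have V_le_F: "V F v \<le> F k" if "3 \<le> k" "k \<le> v" for k
  proof -
    have "V F (v - 1) < V F (Suc (v - 1))"
      using less_least_argmax[OF assms(1), of "v - 1" "V F"] that unfolding v_def by simp
    then have "V F v < F v"
      using V_Suc_less_F_Suc[of "v - 1" F] pos that by simp
    then show ?thesis
      using antimono[of k v] that v_arg_max(2) by simp
  qed
  have F_le_V: "F k \<le> V F v" if "v + 1 \<le> k" "k \<le> n" for k
  proof -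
    have "F (Suc v) \<le> V F v"
      using F_Suc_le_V[of v F] v_arg_max assms(2) that by simp
    then show ?thesis
      using antimono[of "Suc v" k] v_arg_max(1) that by simp
  qed
  have "0 \<le> mu F v k" for k
    using half_F1 V_le_F pos v_arg_max(1) by (intro mu_nonneg) auto
  moreover have "F 1 * (1/2 + mu F v 2) = V F v"
    using pos[of 1] v_arg_max(1) by (simp add: mu_def)
  moreover have "F k * (1 - mu F v k) = V F v" if "3 \<le> k" "k \<le> v" for k
    using pos[of k] that by (simp add: mu_def)
  ultimately show ?thesis
    using F2_mu_eq_V[of v F, OF v_arg_max(1) pos] F_le_V unfolding v_def[symmetric] by blast
qed

end
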